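(* Let $(M_I,\triangleright)$ be a prefactor system, $\alpha$ a consistent set in it, and $b_i\in M_i$ for some $i\in I$. The following are equivalent: (1) $b_i\in\alpha^m$; (2) $\alpha\cup\{b_i\}$ is a consistent set; (3) there are cofinally many $i'\in I$ such that $a_{i'}\triangleright b_i$ for some $a_{i'}\in\alpha\cap M_{i'}$; (4) $a_{i'}\triangleright b_i$ for all $a_{i'}\in\alpha$ with $i'\ge i$; (5) the set of $i'\in I$ such that $a_{i'}\triangleright b_i$ for some $a_{i'}\in\alpha\cap M_{i'}$ contains a member of $\mathcal F(I)$.
   Context: Let $(I,\le)$ be a non-empty directed preordered set. Fix a family $\mathcal F(I)$ of subsets of $I$ such that every member of $\mathcal F(I)$ is cofinal in $I$ (for every $i$ there is $i'\ge i$ in it), $\mathcal F(I)$ is closed under supersets and finite intersections (it is a proper filter on the cofinal subsets), and $\mathcal F(I)$ contains every non-empty upward closed subset of $I$. A system $(M_I,\triangleright)$ consists of sets $M_i$ ($i\in I$, pairwise disjoint) and relations $\triangleright\subseteq M_{i'}\times M_i$ for $i\le i'$, reflexive for $i=i'$. $a_i\approx b_j$ iff there are $i'\ge i,j$ and $c\in M_{i'}$ with $c\triangleright a_i$, $c\triangleright b_j$. A prefactor system is a system with $a_{i'}\approx a_i\iff a_{i'}\triangleright a_i$ for all $i\le i'$. A consistent set is a set $\alpha\subseteq\bigcup_{i\in I}M_i$ such that $a_{i'}\triangleright a_i$ for all $a_{i'},a_i\in\alpha$ with $a_{i'}\in M_{i'}$, $a_i\in M_i$, $i'\ge i$, and such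 that $I_\alpha:=\{i\in I\mid \alpha\cap M_i\ne\emptyset\}\in\mathcal F(I)$. A dynamic element is a consistent set that is maximal under inclusion; for every consistent set $\alpha$ in a prefactor system there is exactly one dynamic element containing $\alpha$, denoted $\alpha^m$. *)

theory Defs
  imports Main
begin

text \<open>The index set is a carrier I with a preorder le.  The elements of all M i live in
  one type 'a; the relation tri c a encodes c \<triangleright> a (only between M i' and M i with le i i').\<close>

definition directed_preorder :: "'i set \<Rightarrow> ('i \<Rightarrow> 'i \<Rightarrow> bool) \<Rightarrow> bool" where
  "directed_preorder I le \<longleftrightarrow> I \<noteq> {}
     \<and> (\<forall>i\<in>I. le i i)
     \<and> (\<forall>i\<in>I. \<forall>j\<in>I. \<forall>k\<in>I. le i j \<longrightarrow> le j k \<longrightarrow> le i k)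
     \<and> (\<forall>i\<in>I. \<forall>j\<in>I. \<exists>k\<in>I. le i k \<and> le j k)"

definition cofinal_in :: "'i set \<Rightarrow> ('i \<Rightarrow> 'i \<Rightarrow> bool) \<Rightarrow> 'i set \<Rightarrow> bool" where
  "cofinal_in I le S \<longleftrightarrow> S \<subseteq> I \<and> (\<forall>i\<in>I. \<exists>i'\<in>S. le i i')"

definition upward_closed :: "'i set \<Rightarrow> ('i \<Rightarrow> 'i \<Rightarrow> bool) \<Rightarrow> 'i set \<Rightarrow> bool" where
  "upward_closed I le S \<longleftrightarrow> S \<subseteq> I \<and> (\<forall>i\<in>S. \<forall>i'\<in>I. le i i' \<longrightarrow> i' \<in> S)"

definition admissible_filter :: "'i set \<Rightarrow> ('i \<Rightarrow> 'i \<Rightarrow> bool) \<Rightarrow> 'i set set \<Rightarrow> bool" where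
  "admissible_filter I le F \<longleftrightarrow>
       (\<forall>S\<in>F. cofinal_in I le S)
     \<and> (\<forall>S\<in>F. \<forall>T. S \<subseteq> T \<and> T \<subseteq> I \<longrightarrow> T \<in> F)
     \<and> (\<forall>S\<in>F. \<forall>T\<in>F. S \<inter> T \<in> F)
     \<and> (\<forall>S. S \<noteq> {} \<and> upward_closed I le S \<longrightarrow> S \<in> F)"

definition sys :: "'i set \<Rightarrow> ('i \<Rightarrow> 'i \<Rightarrow> bool) \<Rightarrow> ('i \<Rightarrow> 'a set) \<Rightarrow> ('a \<Rightarrow> 'a \<Rightarrow> bool) \<Rightarrow> bool" where
  "sys I le M tri \<longleftrightarrow>
       (\<forall>i\<in>I. \<forall>j\<in>I. i \<noteq> j \<longrightarrow> M i \<inter> M j = {})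
     \<and> (\<forall>c a. tri c a \<longrightarrow> (\<exists>i\<in>I. \<exists>i'\<in>I. le i i' \<and> c \<in> M i' \<and> a \<in> M i))
     \<and> (\<forall>i\<in>I. \<forall>a\<in>M i. tri a a)"

definition approx :: "'i set \<Rightarrow> ('i \<Rightarrow> 'i \<Rightarrow> bool) \<Rightarrow> ('i \<Rightarrow> 'a set) \<Rightarrow> ('a \<Rightarrow> 'a \<Rightarrow> bool)
    \<Rightarrow> 'i \<Rightarrow> 'a \<Rightarrow> 'i \<Rightarrow> 'a \<Rightarrow> bool" where
  "approx I le M tri i a j b \<longleftrightarrow> (\<exists>i'\<in>I. le i i' \<and> le j i' \<and> (\<exists>c\<in>M i'. tri c a \<and> tri c b))"

definition prefactor_system :: "'i set \<Rightarrow> ('i \<Rightarrow> 'i \<Rightarrow> bool) \<Rightarrow> 'i set set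
    \<Rightarrow> ('i \<Rightarrow> 'a set) \<Rightarrow> ('a \<Rightarrow> 'a \<Rightarrow> bool) \<Rightarrow> bool" where
  "prefactor_system I le F M tri \<longleftrightarrow>
       directed_preorder I le \<and> admissible_filter I le F \<and> sys I le M tri
     \<and> (\<forall>i\<in>I. \<forall>i'\<in>I. le i i' \<longrightarrow> (\<forall>a\<in>M i'. \<forall>b\<in>M i.
            approx I le M tri i' a i b \<longleftrightarrow> tri a b))"

definition index_set :: "'i set \<Rightarrow> ('i \<Rightarrow> 'a set) \<Rightarrow> 'a set \<Rightarrow> 'i set" where
  "index_set I M \<alpha> = {i\<in>I. \<alpha> \<inter> M i \<noteq> {}}"

definition consistent :: "'i set \<Rightarrow> ('i \<Rightarrow> 'i \<Rightarrow> bool) \<Rightarrow> 'i set set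
    \<Rightarrow> ('i \<Rightarrow> 'a set) \<Rightarrow> ('a \<Rightarrow> 'a \<Rightarrow> bool) \<Rightarrow> 'a set \<Rightarrow> bool" where
  "consistent I le F M tri \<alpha> \<longleftrightarrow>
       \<alpha> \<subseteq> (\<Union>i\<in>I. M i)
     \<and> (\<forall>i\<in>I. \<forall>i'\<in>I. le i i' \<longrightarrow> (\<forall>a\<in>\<alpha> \<inter> M i'. \<forall>b\<in>\<alpha> \<inter> M i. tri a b))
     \<and> index_set I M \<alpha> \<in> F"

definition dynamic_element :: "'i set \<Rightarrow> ('i \<Rightarrow> 'i \<Rightarrow> bool) \<Rightarrow> 'i set set
    \<Rightarrow> ('i \<Rightarrow> 'a set) \<Rightarrow> ('a \<Rightarrow> 'a \<Rightarrow> bool) \<Rightarrow> 'a set \<Rightarrow> bool" where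
  "dynamic_element I le F M tri \<alpha> \<longleftrightarrow>
       consistent I le F M tri \<alpha>
     \<and> (\<forall>\<beta>. consistent I le F M tri \<beta> \<and> \<alpha> \<subseteq> \<beta> \<longrightarrow> \<beta> = \<alpha>)"

text \<open>\<alpha>^m: the (unique) dynamic element containing \<alpha>.\<close>
definition dyn_closure :: "'i set \<Rightarrow> ('i \<Rightarrow> 'i \<Rightarrow> bool) \<Rightarrow> 'i set set
    \<Rightarrow> ('i \<Rightarrow> 'a set) \<Rightarrow> ('a \<Rightarrow> 'a \<Rightarrow> bool) \<Rightarrow> 'a set \<Rightarrow> 'a set" where
  "dyn_closure I le F M tri \<alpha> = (THE \<beta>. dynamic_element I le F M tri \<beta> \<and> \<alpha> \<subseteq> \<beta>)"

end

theory Submission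
  imports Defs
begin

text \<open>Fix b \<in> M i and call i' dominating if some element of \<alpha> \<inter> M i' is \<triangleright> b.
  Since every member of the filter is cofinal and the indices of \<alpha> above i form a member
  of the filter, the following conditions coincide: the dominating indices are cofinal,
  they contain a member of the filter, and every element of \<alpha> above i is \<triangleright> b.
  When they hold, any element of \<alpha> comparable with b and b itself are both \<triangleright>-below a
  single element of \<alpha> further up, so the prefactor property relates them and \<alpha> \<union> {b} is
  consistent.  Thus every dynamic element containing \<alpha> absorbs all such b, while each of
  its members satisfies the conditions; so it is unique and consists exactly of these b.\<close>

lemma admissible_filter_cofinal:
  "admissible_filter I le F \<Longrightarrow> S \<in> F \<Longrightarrow> cofinal_in I le S"
  unfolding admissible_filter_def by simp

lemma admissible_filter_superset:
  "admissible_filter I le F \<Longrightarrow> S \<in> F \<Longrightarrow> S \<subseteq> T \<Longrightarrow> T \<subseteq> I \<Longrightarrow> T \<in> F"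
  unfolding admissible_filter_def by meson

lemma admissible_filter_Int:
  "admissible_filter I le F \<Longrightarrow> S \<in> F \<Longrightarrow> T \<in> F \<Longrightarrow> S \<inter> T \<in> F"
  unfolding admissible_filter_def by simp

lemma admissible_filter_upward_closed:
  "admissible_filter I le F \<Longrightarrow> S \<noteq> {} \<Longrightarrow> upward_closed I le S \<Longrightarrow> S \<in> F"
  unfolding admissible_filter_def by simp

lemma ex_subset_in_admissible_filter_iff:
  assumes "admissible_filter I le F" and "T \<subseteq> I"
  shows "(\<exists>S\<in>F. S \<subseteq> T) \<longleftrightarrow> T \<in> F"
  using assms admissible_filter_superset by blast

lemma directed_preorder_refl: "directed_preorder I le \<Longrightarrow> i \<in> I \<Longrightarrow> le i i"
  unfolding directed_preorder_def by simp

lemma directed_preorder_trans: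
  "directed_preorder I le \<Longrightarrow> i \<in> I \<Longrightarrow> j \<in> I \<Longrightarrow> k \<in> I \<Longrightarrow> le i j \<Longrightarrow> le j k \<Longrightarrow> le i k"
  unfolding directed_preorder_def by metis

lemma cone_in_admissible_filter:
  assumes dir: "directed_preorder I le" and filter: "admissible_filter I le F" and "i \<in> I"
  shows "{i'\<in>I. le i i'} \<in> F"
proof (rule admissible_filter_upward_closed[OF filter])
  show "{i'\<in>I. le i i'} \<noteq> {}"
    using directed_preorder_refl[OF dir] \<open>i \<in> I\<close> by blast
  show "upward_closed I le {i'\<in>I. le i i'}"
    unfolding upward_closed_def
  proof (intro conjI ballI impI)
    fix j k assume "j \<in> {i'\<in>I. le i i'}" "k \<in> I" "le j k"
    then show "k \<in> {i'\<in>I. le i i'}"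
      using directed_preorder_trans[OF dir \<open>i \<in> I\<close>, of j k] by simp
  qed blast
qed

lemma cofinal_in_mono:
  "cofinal_in I le S \<Longrightarrow> S \<subseteq> T \<Longrightarrow> T \<subseteq> I \<Longrightarrow> cofinal_in I le T"
  unfolding cofinal_in_def by blast

lemma consistent_tri:
  assumes "consistent I le F M tri \<alpha>"
    and "i \<in> I" "i' \<in> I" "le i i'" "a \<in> \<alpha>" "a \<in> M i'" "b \<in> \<alpha>" "b \<in> M i"
  shows "tri a b"
  using assms unfolding consistent_def by blast

lemma consistent_subset_Union: "consistent I le F M tri \<alpha> \<Longrightarrow> \<alpha> \<subseteq> (\<Union>i\<in>I. M i)"
  unfolding consistent_def by simp

lemma consistent_index_set: "consistent I le F M tri \<alpha> \<Longrightarrow> index_set I M \<alpha> \<in> F"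
  unfolding consistent_def by simp

lemma consistentI:
  assumes "\<alpha> \<subseteq> (\<Union>i\<in>I. M i)"
    and "\<And>i i' a b. i \<in> I \<Longrightarrow> i' \<in> I \<Longrightarrow> le i i' \<Longrightarrow> a \<in> \<alpha> \<Longrightarrow> a \<in> M i'
           \<Longrightarrow> b \<in> \<alpha> \<Longrightarrow> b \<in> M i \<Longrightarrow> tri a b"
    and "index_set I M \<alpha> \<in> F"
  shows "consistent I le F M tri \<alpha>"
  using assms unfolding consistent_def by blast

lemma index_set_mono: "\<alpha> \<subseteq> \<beta> \<Longrightarrow> index_set I M \<alpha> \<subseteq> index_set I M \<beta>"
  unfolding index_set_def by blast

lemma index_set_subset: "index_set I M \<alpha> \<subseteq> I"
  unfolding index_set_def by blast

lemma consistent_Union_chain: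
  assumes filter: "admissible_filter I le F"
    and cons: "\<And>X. X \<in> C \<Longrightarrow> consistent I le F M tri X"
    and chain: "\<And>X Y. X \<in> C \<Longrightarrow> Y \<in> C \<Longrightarrow> X \<subseteq> Y \<or> Y \<subseteq> X"
    and "C \<noteq> {}"
  shows "consistent I le F M tri (\<Union>C)"
proof (rule consistentI)
  show "\<Union>C \<subseteq> (\<Union>i\<in>I. M i)"
    using cons consistent_subset_Union by (metis Union_least)
  fix i i' a b
  assume "i \<in> I" "i' \<in> I" "le i i'" "a \<in> \<Union>C" "a \<in> M i'" "b \<in> \<Union>C" "b \<in> M i"
  moreover obtain Z where "Z \<in> C" "a \<in> Z" "b \<in> Z"
    using \<open>a \<in> \<Union>C\<close> \<open>b \<in> \<Union>C\<close> chain by blast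
  ultimately show "tri a b"
    using consistent_tri[OF cons] by blast
next
  obtain X where "X \<in> C"
    using \<open>C \<noteq> {}\<close> by blast
  then have "index_set I M X \<in> F"
    using cons consistent_index_set by blast
  moreover have "index_set I M X \<subseteq> index_set I M (\<Union>C)"
    using \<open>X \<in> C\<close> by (intro index_set_mono) blast
  ultimately show "index_set I M (\<Union>C) \<in> F"
    by (rule admissible_filter_superset[OF filter _ _ index_set_subset])
qed

lemma dynamic_element_exists:
  assumes filter: "admissible_filter I le F" and cons: "consistent I le F M tri \<alpha>"
  shows "\<exists>\<beta>. dynamic_element I le F M tri \<beta> \<and> \<alpha> \<subseteq> \<beta>"
proof -
  let ?A = "{\<beta>. consistent I le F M tri \<beta> \<and> \<alpha> \<subseteq> \<beta>}"
  have bounded: "\<exists>U\<in>?A. \<forall>X\<in>C. X \<subseteq> U" if chain: "C \<in> chains ?A" for C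
  proof (cases "C = {}")
    case True
    then show ?thesis using cons by blast
  next
    case False
    have "C \<subseteq> ?A"
      using chain by (rule chainsD2)
    then have "consistent I le F M tri (\<Union>C)"
      using consistent_Union_chain[OF filter _ chainsD[OF chain] False] by blast
    moreover have "\<alpha> \<subseteq> \<Union>C"
      using \<open>C \<subseteq> ?A\<close> False by blast
    ultimately show ?thesis by blast
  qed
  have "\<exists>\<beta>\<in>?A. \<forall>X\<in>?A. \<beta> \<subseteq> X \<longrightarrow> X = \<beta>"
    by (intro Zorn_Lemma2 ballI bounded)
  then obtain \<beta> where "\<beta> \<in> ?A" and "\<forall>X\<in>?A. \<beta> \<subseteq> X \<longrightarrow> X = \<beta>" ..
  then show ?thesis
    unfolding dynamic_element_def by blast
qed

lemma dynamic_element_consistent: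
  "dynamic_element I le F M tri \<beta> \<Longrightarrow> consistent I le F M tri \<beta>"
  unfolding dynamic_element_def by simp

lemma dynamic_element_maximal:
  "dynamic_element I le F M tri \<beta> \<Longrightarrow> consistent I le F M tri \<gamma> \<Longrightarrow> \<beta> \<subseteq> \<gamma> \<Longrightarrow> \<gamma> = \<beta>"
  unfolding dynamic_element_def by blast

lemma tri_above_if_mem_consistent:
  assumes "consistent I le F M tri \<beta>" and "\<alpha> \<subseteq> \<beta>" and "b \<in> \<beta>" "i \<in> I" "b \<in> M i"
  shows "\<forall>i'\<in>I. le i i' \<longrightarrow> (\<forall>a\<in>\<alpha> \<inter> M i'. tri a b)"
  using consistent_tri[OF assms(1)] assms(2-) by blast

lemma sys_tri_refl: "sys I le M tri \<Longrightarrow> i \<in> I \<Longrightarrow> a \<in> M i \<Longrightarrow> tri a a"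
  unfolding sys_def by simp

lemma sys_index_unique:
  assumes "sys I le M tri" and "i \<in> I" "j \<in> I" "a \<in> M i" "a \<in> M j"
  shows "i = j"
proof -
  have "\<forall>i\<in>I. \<forall>j\<in>I. i \<noteq> j \<longrightarrow> M i \<inter> M j = {}"
    using assms(1) unfolding sys_def by simp
  then show ?thesis
    using assms(2-) by blast
qed

locale prefactor =
  fixes I :: "'i set" and le :: "'i \<Rightarrow> 'i \<Rightarrow> bool" and F :: "'i set set"
    and M :: "'i \<Rightarrow> 'a set" and tri :: "'a \<Rightarrow> 'a \<Rightarrow> bool"
  assumes is_prefactor_system: "prefactor_system I le F M tri"
begin

lemma directed: "directed_preorder I le"
  and filter: "admissible_filter I le F"
  and system: "sys I le M tri"
  using is_prefactor_system unfolding prefactor_system_def by simp_all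

lemma index_le_trans: "i \<in> I \<Longrightarrow> j \<in> I \<Longrightarrow> k \<in> I \<Longrightarrow> le i j \<Longrightarrow> le j k \<Longrightarrow> le i k"
  by (rule directed_preorder_trans[OF directed])

lemma tri_refl: "i \<in> I \<Longrightarrow> a \<in> M i \<Longrightarrow> tri a a"
  by (rule sys_tri_refl[OF system])

lemma index_unique: "i \<in> I \<Longrightarrow> j \<in> I \<Longrightarrow> a \<in> M i \<Longrightarrow> a \<in> M j \<Longrightarrow> i = j"
  by (rule sys_index_unique[OF system])

lemma tri_if_approx:
  "i \<in> I \<Longrightarrow> i' \<in> I \<Longrightarrow> le i i' \<Longrightarrow> a \<in> M i' \<Longrightarrow> b \<in> M i \<Longrightarrow> approx I le M tri i' a i b
    \<Longrightarrow> tri a b"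
  using is_prefactor_system unfolding prefactor_system_def by simp

lemma tri_if_common_dominator:
  assumes "i \<in> I" "i' \<in> I" "le i i'" "a \<in> M i'" "b \<in> M i"
    and "k \<in> I" "le i' k" "c \<in> M k" "tri c a" "tri c b"
  shows "tri a b"
proof (rule tri_if_approx[OF assms(1-5)])
  have "le i k"
    using index_le_trans assms by blast
  then show "approx I le M tri i' a i b"
    unfolding approx_def using assms by blast
qed

definition dominating_indices :: "'a set \<Rightarrow> 'a \<Rightarrow> 'i set" where
  "dominating_indices \<alpha> b = {i'\<in>I. \<exists>a\<in>\<alpha> \<inter> M i'. tri a b}"

lemma dominating_indices_subset: "dominating_indices \<alpha> b \<subseteq> I"
  unfolding dominating_indices_def by blast

lemma dominating_indices_mono: "\<alpha> \<subseteq> \<beta> \<Longrightarrow> dominating_indices \<alpha> b \<subseteq> dominating_indices \<beta> b"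
  unfolding dominating_indices_def by blast

lemma obtain_dominator_above:
  assumes "cofinal_in I le (dominating_indices \<alpha> b)" and "j \<in> I"
  obtains k c where "k \<in> I" "le j k" "c \<in> \<alpha>" "c \<in> M k" "tri c b"
  using assms unfolding cofinal_in_def dominating_indices_def by blast

lemma tri_above_if_cofinal:
  assumes cons: "consistent I le F M tri \<alpha>" and "i \<in> I" "b \<in> M i"
    and cofinal: "cofinal_in I le (dominating_indices \<alpha> b)"
    and "i' \<in> I" "le i i'" "a \<in> \<alpha>" "a \<in> M i'"
  shows "tri a b"
proof -
  obtain k c where "k \<in> I" "le i' k" "c \<in> \<alpha>" "c \<in> M k" "tri c b"
    using obtain_dominator_above[OF cofinal \<open>i' \<in> I\<close>] .
  moreover have "tri c a"
    using consistent_tri[OF cons] calculation assms by blast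
  ultimately show ?thesis
    using tri_if_common_dominator assms by blast
qed

lemma tri_below_if_cofinal:
  assumes cons: "consistent I le F M tri \<alpha>" and "i \<in> I" "b \<in> M i"
    and cofinal: "cofinal_in I le (dominating_indices \<alpha> b)"
    and "j \<in> I" "le j i" "a \<in> \<alpha>" "a \<in> M j"
  shows "tri b a"
proof -
  obtain k c where "k \<in> I" "le i k" "c \<in> \<alpha>" "c \<in> M k" "tri c b"
    using obtain_dominator_above[OF cofinal \<open>i \<in> I\<close>] .
  moreover have "tri c a"
    using consistent_tri[OF cons] index_le_trans calculation assms by blast
  ultimately show ?thesis
    using tri_if_common_dominator assms by blast
qed

lemma consistent_insert_if_cofinal:
  assumes cons: "consistent I le F M tri \<alpha>" and i: "i \<in> I" "b \<in> M i"
    and cofinal: "cofinal_in I le (dominating_indices \<alpha> b)"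
  shows "consistent I le F M tri (insert b \<alpha>)"
proof (rule consistentI)
  show "insert b \<alpha> \<subseteq> (\<Union>i\<in>I. M i)"
    using consistent_subset_Union[OF cons] i by blast
  show "index_set I M (insert b \<alpha>) \<in> F"
    by (rule admissible_filter_superset[OF filter consistent_index_set[OF cons] index_set_mono
          index_set_subset]) blast
next
  fix j j' x y
  assume j: "j \<in> I" "j' \<in> I" "le j j'" and x: "x \<in> insert b \<alpha>" "x \<in> M j'"
    and y: "y \<in> insert b \<alpha>" "y \<in> M j"
  then consider "x = b" "y = b" | "x = b" "y \<in> \<alpha>" "j' = i" | "x \<in> \<alpha>" "y = b" "j = i"
    | "x \<in> \<alpha>" "y \<in> \<alpha>"
    using index_unique i by blast
  then show "tri x y"
  proof cases
    case 1
    then show ?thesis using tri_refl i by simp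
  next
    case 2
    then show ?thesis
      using tri_below_if_cofinal[OF cons i cofinal] j y by blast
  next
    case 3
    then show ?thesis
      using tri_above_if_cofinal[OF cons i cofinal] j x by blast
  next
    case 4
    then show ?thesis
      using consistent_tri[OF cons] j x y by blast
  qed
qed

lemma dominating_indices_in_F_if_tri_above:
  assumes cons: "consistent I le F M tri \<alpha>" and "i \<in> I"
    and above: "\<forall>i'\<in>I. le i i' \<longrightarrow> (\<forall>a\<in>\<alpha> \<inter> M i'. tri a b)"
  shows "dominating_indices \<alpha> b \<in> F"
proof (rule admissible_filter_superset[OF filter _ _ dominating_indices_subset])
  show "index_set I M \<alpha> \<inter> {i'\<in>I. le i i'} \<in> F"
    using admissible_filter_Int[OF filter consistent_index_set[OF cons]]
      cone_in_admissible_filter[OF directed filter \<open>i \<in> I\<close>] by blast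
  show "index_set I M \<alpha> \<inter> {i'\<in>I. le i i'} \<subseteq> dominating_indices \<alpha> b"
    using above unfolding index_set_def dominating_indices_def by blast
qed

lemma cofinal_dominating_indices_iff_tri_above:
  assumes cons: "consistent I le F M tri \<alpha>" and "i \<in> I" "b \<in> M i"
  shows "cofinal_in I le (dominating_indices \<alpha> b)
    \<longleftrightarrow> (\<forall>i'\<in>I. le i i' \<longrightarrow> (\<forall>a\<in>\<alpha> \<inter> M i'. tri a b))"
  using tri_above_if_cofinal[OF assms] admissible_filter_cofinal[OF filter]
    dominating_indices_in_F_if_tri_above[OF cons \<open>i \<in> I\<close>] by blast

lemma dominating_indices_in_F_iff_tri_above:
  assumes cons: "consistent I le F M tri \<alpha>" and "i \<in> I" "b \<in> M i"
  shows "dominating_indices \<alpha> b \<in> F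
    \<longleftrightarrow> (\<forall>i'\<in>I. le i i' \<longrightarrow> (\<forall>a\<in>\<alpha> \<inter> M i'. tri a b))"
  using cofinal_dominating_indices_iff_tri_above[OF assms] admissible_filter_cofinal[OF filter]
    dominating_indices_in_F_if_tri_above[OF cons \<open>i \<in> I\<close>] by blast

lemma consistent_insert_iff_tri_above:
  assumes cons: "consistent I le F M tri \<alpha>" and "i \<in> I" "b \<in> M i"
  shows "consistent I le F M tri (insert b \<alpha>)
    \<longleftrightarrow> (\<forall>i'\<in>I. le i i' \<longrightarrow> (\<forall>a\<in>\<alpha> \<inter> M i'. tri a b))"
  using tri_above_if_mem_consistent[of I le F M tri "insert b \<alpha>" \<alpha> b i] assms
    consistent_insert_if_cofinal[OF assms] cofinal_dominating_indices_iff_tri_above[OF assms]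
  by blast

lemma dynamic_element_absorbs:
  assumes dyn: "dynamic_element I le F M tri \<beta>" and cons: "consistent I le F M tri \<alpha>"
    and "\<alpha> \<subseteq> \<beta>" and i: "i \<in> I" "b \<in> M i"
    and above: "\<forall>i'\<in>I. le i i' \<longrightarrow> (\<forall>a\<in>\<alpha> \<inter> M i'. tri a b)"
  shows "b \<in> \<beta>"
proof -
  have "cofinal_in I le (dominating_indices \<alpha> b)"
    using cofinal_dominating_indices_iff_tri_above[OF cons i] above by blast
  then have "cofinal_in I le (dominating_indices \<beta> b)"
    by (rule cofinal_in_mono[OF _ dominating_indices_mono[OF \<open>\<alpha> \<subseteq> \<beta>\<close>] dominating_indices_subset])
  then have "consistent I le F M tri (insert b \<beta>)"
    using consistent_insert_if_cofinal[OF dynamic_element_consistent[OF dyn] i] by blast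
  then have "insert b \<beta> = \<beta>"
    using dynamic_element_maximal[OF dyn] by blast
  then show ?thesis by blast
qed

lemma dynamic_element_subset:
  assumes cons: "consistent I le F M tri \<alpha>"
    and "dynamic_element I le F M tri \<beta>" "\<alpha> \<subseteq> \<beta>"
    and dyn: "dynamic_element I le F M tri \<gamma>" and "\<alpha> \<subseteq> \<gamma>"
  shows "\<gamma> \<subseteq> \<beta>"
proof
  fix b assume "b \<in> \<gamma>"
  then obtain i where i: "i \<in> I" "b \<in> M i"
    using consistent_subset_Union[OF dynamic_element_consistent[OF dyn]] by blast
  then have "\<forall>i'\<in>I. le i i' \<longrightarrow> (\<forall>a\<in>\<alpha> \<inter> M i'. tri a b)"
    using tri_above_if_mem_consistent[OF dynamic_element_consistent[OF dyn] \<open>\<alpha> \<subseteq> \<gamma>\<close> \<open>b \<in> \<gamma>\<close>]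
    by blast
  then show "b \<in> \<beta>"
    using dynamic_element_absorbs assms i by blast
qed

lemma dyn_closure_eq:
  assumes "consistent I le F M tri \<alpha>" and "dynamic_element I le F M tri \<beta>" "\<alpha> \<subseteq> \<beta>"
  shows "dyn_closure I le F M tri \<alpha> = \<beta>"
  unfolding dyn_closure_def
  using assms dynamic_element_subset[OF assms] dynamic_element_subset[OF assms(1) _ _ assms(2,3)]
  by (intro the_equality) blast+

lemma dyn_closure_dynamic:
  assumes "consistent I le F M tri \<alpha>"
  shows "dynamic_element I le F M tri (dyn_closure I le F M tri \<alpha>)"
    and "\<alpha> \<subseteq> dyn_closure I le F M tri \<alpha>"
  using dynamic_element_exists[OF filter assms] dyn_closure_eq[OF assms] by auto

lemma mem_dyn_closure_iff_tri_above:
  assumes cons: "consistent I le F M tri \<alpha>" and "i \<in> I" "b \<in> M i"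
  shows "b \<in> dyn_closure I le F M tri \<alpha>
    \<longleftrightarrow> (\<forall>i'\<in>I. le i i' \<longrightarrow> (\<forall>a\<in>\<alpha> \<inter> M i'. tri a b))"
  using tri_above_if_mem_consistent[OF dynamic_element_consistent[OF dyn_closure_dynamic(1)[OF cons]]
      dyn_closure_dynamic(2)[OF cons]] assms
    dynamic_element_absorbs[OF dyn_closure_dynamic(1)[OF cons] cons dyn_closure_dynamic(2)[OF cons]]
  by blast

end

theorem lemma2p9:
  assumes pf: "prefactor_system I le F M tri"
    and cons: "consistent I le F M tri \<alpha>"
    and iI: "i \<in> I" and bM: "b \<in> M i"
  shows "(b \<in> dyn_closure I le F M tri \<alpha> \<longleftrightarrow> consistent I le F M tri (\<alpha> \<union> {b}))
       \<and> (consistent I le F M tri (\<alpha> \<union> {b}) \<longleftrightarrow>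
            (\<forall>j\<in>I. \<exists>i'\<in>I. le j i' \<and> (\<exists>a\<in>\<alpha> \<inter> M i'. tri a b)))
       \<and> ((\<forall>j\<in>I. \<exists>i'\<in>I. le j i' \<and> (\<exists>a\<in>\<alpha> \<inter> M i'. tri a b)) \<longleftrightarrow>
            (\<forall>i'\<in>I. le i i' \<longrightarrow> (\<forall>a\<in>\<alpha> \<inter> M i'. tri a b)))
       \<and> ((\<forall>i'\<in>I. le i i' \<longrightarrow> (\<forall>a\<in>\<alpha> \<inter> M i'. tri a b)) \<longleftrightarrow>
            (\<exists>S\<in>F. S \<subseteq> {i'\<in>I. \<exists>a\<in>\<alpha> \<inter> M i'. tri a b}))"
proof -
  interpret prefactor I le F M tri
    by (rule prefactor.intro[OF pf])
  have "\<alpha> \<union> {b} = insert b \<alpha>"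
    by simp
  moreover have "(\<forall>j\<in>I. \<exists>i'\<in>I. le j i' \<and> (\<exists>a\<in>\<alpha> \<inter> M i'. tri a b))
      \<longleftrightarrow> cofinal_in I le (dominating_indices \<alpha> b)"
    unfolding cofinal_in_def dominating_indices_def by blast
  moreover have "(\<exists>S\<in>F. S \<subseteq> {i'\<in>I. \<exists>a\<in>\<alpha> \<inter> M i'. tri a b}) \<longleftrightarrow> dominating_indices \<alpha> b \<in> F"
    using ex_subset_in_admissible_filter_iff[OF filter dominating_indices_subset]
    unfolding dominating_indices_def .
  ultimately show ?thesis
    using mem_dyn_closure_iff_tri_above[OF cons iI bM] consistent_insert_iff_tri_above[OF cons iI bM]
      cofinal_dominating_indices_iff_tri_above[OF cons iI bM]
      dominating_indices_in_F_iff_tri_above[OF cons iI bM]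
    by simp
qed

end
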